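(* Let $B$ be a boolean algebra, $(\mathcal L,i)$ the free frame on ${\sf Filt}(B)$ as in the context, and define $e:B\to\mathfrak B(\mathcal L)$ by $e(b)=i({\uparrow}b)$. Then $e$ is a well-defined injective boolean homomorphism, and the pair $(\mathfrak B(\mathcal L),e)$ is a canonical extension of $B$; that is, $e$ is dense and compact.
   Context: ${\sf Filt}(B)$ is the set of filters of $B$ ordered by reverse inclusion; it is a meet-semilattice with top $\{1\}$ and bottom $B$. Concretely, $\mathcal L$ is the frame of all subsets of the set of proper filters of $B$ that are closed upward under inclusion, ordered by inclusion, and $i(F)=\{G\text{ proper filter}\mid F\subseteq G\}$; $(\mathcal L,i)$ is the free frame on ${\sf Filt}(B)$. For a frame $L$, $a^*=\bigvee\{s\mid a\wedge s=0\}$ and $\mathfrak B(L)=\{a^{**}\mid a\in L\}$ is the booleanization, a complete boolean algebra with meets as in $L$ and joins $(\bigvee S)^{**}$. For a boolean algebra $B$, a complete boolean algebra $C$ and an injective boolean homomorphism $e:B\to C$: $e$ is compact if whenever $S,T\subseteq B$ with $\bigwedge e[S]\le\bigvee e[T]$ there are finite $S_0\subseteq S$, $T_0\subseteq T$ with $\bigwedge S_0\le\bigvee T_0$; $e$ is dense if every element of $C$ is a join of meets of elements of $e[B]$; $(C,e)$ is a canonical extension if $e$ is dense and compact. *)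

theory Defs
  imports Main
begin

definition is_filter :: "'a::boolean_algebra set \<Rightarrow> bool" where
  "is_filter F \<longleftrightarrow> top \<in> F \<and> (\<forall>x\<in>F. \<forall>y. x \<le> y \<longrightarrow> y \<in> F)
                    \<and> (\<forall>x\<in>F. \<forall>y\<in>F. inf x y \<in> F)"

definition proper_filter :: "'a::boolean_algebra set \<Rightarrow> bool" where
  "proper_filter F \<longleftrightarrow> is_filter F \<and> bot \<notin> F"

definition PF :: "'a::boolean_algebra set set" where
  "PF = {F. proper_filter F}"

definition upb :: "'a::boolean_algebra \<Rightarrow> 'a set" where
  "upb b = {x. b \<le> x}"

text \<open>The frame L: upward closed (under inclusion) sets of proper filters, ordered by inclusion.\<close>
definition frameL :: "'a::boolean_algebra set set set" where
  "frameL = {U. U \<subseteq> PF \<and> (\<forall>F\<in>U. \<forall>G\<in>PF. F \<subseteq> G \<longrightarrow> G \<in> U)}"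

definition iL :: "'a::boolean_algebra set \<Rightarrow> 'a set set" where
  "iL F = {G \<in> PF. F \<subseteq> G}"

text \<open>Pseudocomplement in L: joins in L are unions, bottom is the empty set.\<close>
definition pcompl :: "'a::boolean_algebra set set \<Rightarrow> 'a set set" where
  "pcompl U = \<Union>{S \<in> frameL. U \<inter> S = {}}"

definition boolL :: "'a::boolean_algebra set set set" where
  "boolL = {pcompl (pcompl U) | U. U \<in> frameL}"

text \<open>Joins in the booleanization: (\<Union>S)**; meets as in L (top of L is PF).\<close>
definition bjoin :: "'a::boolean_algebra set set set \<Rightarrow> 'a set set" where
  "bjoin Us = pcompl (pcompl (\<Union>Us))"

definition bmeet :: "'a::boolean_algebra set set set \<Rightarrow> 'a set set" where
  "bmeet Us = PF \<inter> \<Inter>Us"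

definition embL :: "'a::boolean_algebra \<Rightarrow> 'a set set" where
  "embL b = iL (upb b)"

definition fin_meet :: "'a::boolean_algebra set \<Rightarrow> 'a" where
  "fin_meet S = Finite_Set.fold inf top S"

definition fin_join :: "'a::boolean_algebra set \<Rightarrow> 'a" where
  "fin_join S = Finite_Set.fold sup bot S"

end

theory Submission
  imports Defs
begin

text \<open>
  The pseudocomplement of an upset U of proper filters consists of the proper filters G such
  that no proper filter containing G lies in U. A proper filter G not containing -a extends to
  the proper filter generated by G \<union> {a}, so e(-a) = e(a)*; hence e is a boolean homomorphism
  into the regular elements. It reflects the order because a \<sqinter> -b \<noteq> \<bottom> makes the principal
  filter of a \<sqinter> -b a point of e(a) - e(b). Density: a regular x is the union of the sets
  \<Sqinter>e[G] = i(G) for G \<in> x. Compactness: if no finite S0 \<subseteq> S, T0 \<subseteq> T has \<Sqinter>S0 \<le> \<Squnion>T0,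
  the filter H generated by S \<union> -T is proper; it contains the filter generated by S, a point of
  \<Sqinter>e[S], while no proper filter containing H meets \<Union>e[T], so \<Sqinter>e[S] is not below (\<Union>e[T])**.
\<close>

lemma fin_meet_empty [simp]: "fin_meet {} = (top::'a::boolean_algebra)"
  by (simp add: fin_meet_def)

lemma fin_join_empty [simp]: "fin_join {} = (bot::'a::boolean_algebra)"
  by (simp add: fin_join_def)

lemma fin_meet_insert [simp]:
  "finite S \<Longrightarrow> fin_meet (insert x S) = inf x (fin_meet (S::'a::boolean_algebra set))"
proof -
  interpret comp_fun_idem "inf :: 'a \<Rightarrow> 'a \<Rightarrow> 'a" by (fact comp_fun_idem_inf)
  show "finite S \<Longrightarrow> ?thesis" by (simp add: fin_meet_def)
qed

lemma fin_join_insert [simp]: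
  "finite S \<Longrightarrow> fin_join (insert x S) = sup x (fin_join (S::'a::boolean_algebra set))"
proof -
  interpret comp_fun_idem "sup :: 'a \<Rightarrow> 'a \<Rightarrow> 'a" by (fact comp_fun_idem_sup)
  show "finite S \<Longrightarrow> ?thesis" by (simp add: fin_join_def)
qed

lemma fin_meet_Un:
  "finite A \<Longrightarrow> finite B \<Longrightarrow>
    fin_meet (A \<union> B) = inf (fin_meet A) (fin_meet (B::'a::boolean_algebra set))"
  by (induction A rule: finite_induct) (auto simp: inf_assoc)

lemma fin_meet_antimono:
  "finite B \<Longrightarrow> A \<subseteq> B \<Longrightarrow> fin_meet B \<le> fin_meet (A::'a::boolean_algebra set)"
  using fin_meet_Un[of A "B - A"] by (simp add: Un_absorb1 finite_subset)

lemma fin_meet_image_uminus: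
  "finite T \<Longrightarrow> fin_meet (uminus ` T) = - fin_join (T::'a::boolean_algebra set)"
  by (induction T rule: finite_induct) auto

lemma is_filter_upclosed: "is_filter F \<Longrightarrow> x \<in> F \<Longrightarrow> x \<le> y \<Longrightarrow> y \<in> F"
  unfolding is_filter_def by blast

lemma is_filter_inf: "is_filter F \<Longrightarrow> x \<in> F \<Longrightarrow> y \<in> F \<Longrightarrow> inf x y \<in> F"
  unfolding is_filter_def by blast

lemma is_filter_top: "is_filter F \<Longrightarrow> top \<in> F"
  unfolding is_filter_def by blast

lemma fin_meet_mem_filter:
  assumes "is_filter F"
  shows "finite X \<Longrightarrow> X \<subseteq> F \<Longrightarrow> fin_meet X \<in> F"
  by (induction X rule: finite_induct) (auto intro: is_filter_top is_filter_inf assms)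

lemma mem_PF_iff: "F \<in> PF \<longleftrightarrow> is_filter F \<and> bot \<notin> F"
  by (simp add: PF_def proper_filter_def)

lemma PF_compl_not_mem: "F \<in> PF \<Longrightarrow> a \<in> F \<Longrightarrow> - a \<notin> F"
  using is_filter_inf[of F a "- a"] by (auto simp: mem_PF_iff)

lemma principal_filter_in_PF: "c \<noteq> bot \<Longrightarrow> upb c \<in> PF"
  unfolding mem_PF_iff is_filter_def upb_def
  by (auto intro: order_trans le_infI) (use bot_unique in blast)

definition filter_gen :: "'a::boolean_algebra set \<Rightarrow> 'a set" where
  "filter_gen X = {y. \<exists>X0. finite X0 \<and> X0 \<subseteq> X \<and> fin_meet X0 \<le> y}"

lemma mem_filter_gen_iff: "y \<in> filter_gen X \<longleftrightarrow> (\<exists>X0. finite X0 \<and> X0 \<subseteq> X \<and> fin_meet X0 \<le> y)"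
  by (simp add: filter_gen_def)

lemma is_filter_filter_gen: "is_filter (filter_gen X)"
  unfolding is_filter_def
proof (intro conjI ballI allI impI)
  show "top \<in> filter_gen X"
    unfolding mem_filter_gen_iff by (intro exI[of _ "{}"]) simp
  show "y \<in> filter_gen X" if "x \<in> filter_gen X" "x \<le> y" for x y
  proof -
    from that(1) obtain X0 where "finite X0" "X0 \<subseteq> X" "fin_meet X0 \<le> x"
      unfolding mem_filter_gen_iff by blast
    moreover from this(3) that(2) have "fin_meet X0 \<le> y" by (rule order_trans)
    ultimately show ?thesis unfolding mem_filter_gen_iff by blast
  qed
  show "inf x y \<in> filter_gen X" if "x \<in> filter_gen X" "y \<in> filter_gen X" for x y
  proof -
    from that obtain A B where A: "finite A" "A \<subseteq> X" "fin_meet A \<le> x"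
      and B: "finite B" "B \<subseteq> X" "fin_meet B \<le> y"
      unfolding mem_filter_gen_iff by blast
    then have "fin_meet (A \<union> B) \<le> inf x y" by (simp add: fin_meet_Un le_infI1 le_infI2)
    with A B show ?thesis
      unfolding mem_filter_gen_iff by (intro exI[of _ "A \<union> B"]) simp
  qed
qed

lemma subset_filter_gen: "X \<subseteq> filter_gen X"
proof
  show "x \<in> filter_gen X" if "x \<in> X" for x
    using that unfolding mem_filter_gen_iff by (intro exI[of _ "{x}"]) simp
qed

lemma filter_gen_mono: "X \<subseteq> Y \<Longrightarrow> filter_gen X \<subseteq> filter_gen Y"
  unfolding subset_iff mem_filter_gen_iff by (meson order_trans)

lemma filter_gen_in_PF:
  assumes "\<And>X0. finite X0 \<Longrightarrow> X0 \<subseteq> X \<Longrightarrow> fin_meet X0 \<noteq> bot"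
  shows "filter_gen X \<in> PF"
proof -
  have "bot \<notin> filter_gen X"
    unfolding mem_filter_gen_iff using assms by (simp add: bot_unique)
  then show ?thesis by (simp add: mem_PF_iff is_filter_filter_gen)
qed

lemma PF_extend_to_mem:
  assumes "G \<in> PF" "- a \<notin> G"
  shows "\<exists>H\<in>PF. G \<subseteq> H \<and> a \<in> H"
proof (intro bexI conjI)
  have G: "is_filter G" using assms(1) by (simp add: mem_PF_iff)
  show "filter_gen (insert a G) \<in> PF"
  proof (rule filter_gen_in_PF)
    fix X0 assume X0: "finite X0" "X0 \<subseteq> insert a G"
    define g where "g = fin_meet (X0 - {a})"
    have "g \<in> G"
      unfolding g_def using X0 by (intro fin_meet_mem_filter[OF G]) auto
    have "inf a g = fin_meet (insert a (X0 - {a}))"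
      unfolding g_def using X0(1) by (simp only: fin_meet_insert finite_Diff)
    also have "\<dots> \<le> fin_meet X0"
      by (rule fin_meet_antimono) (use X0 in auto)
    finally have ag: "inf a g \<le> fin_meet X0" .
    show "fin_meet X0 \<noteq> bot"
    proof
      assume "fin_meet X0 = bot"
      with ag have "inf g a = bot" by (simp add: inf_commute bot_unique)
      then have "g \<le> - a" by (simp add: inf_shunt)
      with \<open>g \<in> G\<close> have "- a \<in> G" by (rule is_filter_upclosed[OF G])
      with assms(2) show False by contradiction
    qed
  qed
  show "G \<subseteq> filter_gen (insert a G)" "a \<in> filter_gen (insert a G)"
    using subset_filter_gen[of "insert a G"] by auto
qed

lemma embL_eq: "embL b = {G \<in> PF. b \<in> G}"
  unfolding embL_def iL_def upb_def mem_PF_iff by (auto intro: is_filter_upclosed)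

lemma embL_in_frameL: "embL b \<in> frameL"
  unfolding frameL_def embL_eq by auto

lemma pcompl_eq: "pcompl U = {G \<in> PF. \<forall>H\<in>PF. G \<subseteq> H \<longrightarrow> H \<notin> U}" (is "_ = ?P")
proof
  show "pcompl U \<subseteq> ?P"
    unfolding pcompl_def frameL_def by blast
  have "?P \<in> frameL" "U \<inter> ?P = {}"
    unfolding frameL_def by auto
  then show "?P \<subseteq> pcompl U"
    unfolding pcompl_def by blast
qed

lemma pcompl_in_frameL: "pcompl U \<in> frameL"
  unfolding pcompl_eq frameL_def by auto

lemma pcompl_antimono: "U \<subseteq> V \<Longrightarrow> pcompl V \<subseteq> pcompl U"
  unfolding pcompl_eq by blast

lemma pcompl_Un: "pcompl (U \<union> V) = pcompl U \<inter> pcompl V"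
  unfolding pcompl_eq by blast

lemma subset_pcompl_pcompl: "U \<in> frameL \<Longrightarrow> U \<subseteq> pcompl (pcompl U)"
  unfolding pcompl_eq frameL_def by blast

lemma pcompl_pcompl_pcompl: "U \<in> frameL \<Longrightarrow> pcompl (pcompl (pcompl U)) = pcompl U"
  by (meson equalityI pcompl_antimono pcompl_in_frameL subset_pcompl_pcompl)

lemma boolL_iff: "U \<in> boolL \<longleftrightarrow> U \<in> frameL \<and> pcompl (pcompl U) = U"
  unfolding boolL_def using pcompl_in_frameL pcompl_pcompl_pcompl by fastforce

lemma embL_uminus: "embL (- a) = pcompl (embL a)"
proof -
  have "- a \<in> G \<longleftrightarrow> (\<forall>H\<in>PF. G \<subseteq> H \<longrightarrow> a \<notin> H)" if "G \<in> PF" for G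
  proof
    show "\<forall>H\<in>PF. G \<subseteq> H \<longrightarrow> a \<notin> H" if "- a \<in> G"
      using that PF_compl_not_mem by blast
    show "- a \<in> G" if "\<forall>H\<in>PF. G \<subseteq> H \<longrightarrow> a \<notin> H"
      using that PF_extend_to_mem[OF \<open>G \<in> PF\<close>] by blast
  qed
  then show ?thesis
    unfolding pcompl_eq embL_eq by auto
qed

lemma embL_inf: "embL (inf a b) = embL a \<inter> embL b"
  unfolding embL_eq mem_PF_iff by (auto intro: is_filter_inf is_filter_upclosed)

lemma embL_sup: "embL (sup a b) = bjoin {embL a, embL b}"
proof -
  have "bjoin {embL a, embL b} = pcompl (pcompl (embL a) \<inter> pcompl (embL b))"
    by (simp add: bjoin_def pcompl_Un)
  also have "\<dots> = embL (- (inf (- a) (- b)))"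
    by (simp only: embL_inf embL_uminus)
  finally show ?thesis by simp
qed

lemma embL_in_boolL: "embL b \<in> boolL"
  using embL_uminus[of "- b"] embL_uminus[of b] by (simp add: boolL_iff embL_in_frameL)

lemma embL_le_iff: "embL a \<subseteq> embL b \<longleftrightarrow> a \<le> b"
proof
  assume sub: "embL a \<subseteq> embL b"
  show "a \<le> b"
  proof (rule ccontr)
    assume "\<not> a \<le> b"
    then have "inf a (- b) \<noteq> bot" by (simp add: inf_shunt)
    then have "upb (inf a (- b)) \<in> embL a"
      using principal_filter_in_PF by (auto simp: embL_eq upb_def)
    with sub have "inf a (- b) \<le> b" by (auto simp: embL_eq upb_def)
    then have "inf a (- b) = bot" by (metis inf.orderE inf_compl_bot_right inf_left_commute inf_commute)
    with \<open>inf a (- b) \<noteq> bot\<close> show False by contradiction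
  qed
qed (auto simp: embL_eq mem_PF_iff intro: is_filter_upclosed)

lemma inj_embL: "inj embL"
  by (rule injI) (metis embL_le_iff order_antisym subset_refl)

lemma embL_top: "embL top = PF"
  unfolding embL_eq by (auto simp: mem_PF_iff is_filter_top)

lemma embL_bot: "embL bot = {}"
  unfolding embL_eq mem_PF_iff by auto

lemma boolL_eq_bjoin_bmeet_embL:
  assumes "x \<in> boolL"
  shows "x = bjoin ((\<lambda>S. bmeet (embL ` S)) ` x)"
proof -
  have x: "x \<in> frameL" "pcompl (pcompl x) = x" using assms by (simp_all add: boolL_iff)
  have "bmeet (embL ` G) = iL G" for G :: "'a set"
    by (auto simp: bmeet_def embL_eq iL_def)
  moreover have "(\<Union>G\<in>x. iL G) = x"
    using x(1) by (auto simp: iL_def frameL_def)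
  ultimately show ?thesis using x(2) by (simp add: bjoin_def)
qed

lemma no_finite_cover_imp_proper:
  assumes "\<nexists>S0 T0. finite S0 \<and> S0 \<subseteq> S \<and> finite T0 \<and> T0 \<subseteq> T \<and> fin_meet S0 \<le> fin_join T0"
  shows "filter_gen (S \<union> uminus ` T) \<in> PF"
proof (rule filter_gen_in_PF)
  fix X0 assume X0: "finite X0" "X0 \<subseteq> S \<union> uminus ` T"
  obtain T0 where T0: "T0 \<subseteq> T" "finite T0" "X0 - S = uminus ` T0"
    using X0 finite_subset_image[of "X0 - S" uminus T] by blast
  have "X0 = (X0 \<inter> S) \<union> uminus ` T0" using T0 by blast
  then have "fin_meet X0 = inf (fin_meet (X0 \<inter> S)) (- fin_join T0)"
    by (metis fin_meet_Un fin_meet_image_uminus X0(1) T0(2) finite_Int finite_imageI)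
  moreover have "\<not> fin_meet (X0 \<inter> S) \<le> fin_join T0"
    using assms X0(1) T0 by blast
  ultimately show "fin_meet X0 \<noteq> bot" by (simp add: inf_shunt)
qed

lemma embL_compact:
  assumes incl: "bmeet (embL ` S) \<subseteq> bjoin (embL ` T)"
  shows "\<exists>S0 T0. finite S0 \<and> S0 \<subseteq> S \<and> finite T0 \<and> T0 \<subseteq> T \<and> fin_meet S0 \<le> fin_join T0"
proof (rule ccontr)
  assume "\<not> ?thesis"
  then have H: "filter_gen (S \<union> uminus ` T) \<in> PF" (is "?H \<in> PF")
    by (rule no_finite_cover_imp_proper)
  have GH: "filter_gen S \<subseteq> ?H" by (rule filter_gen_mono) auto
  then have "filter_gen S \<in> PF" using H by (auto simp: mem_PF_iff is_filter_filter_gen)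
  then have "filter_gen S \<in> bmeet (embL ` S)"
    using subset_filter_gen[of S] by (auto simp: bmeet_def embL_eq)
  with incl have "filter_gen S \<in> pcompl (pcompl (\<Union>(embL ` T)))"
    unfolding bjoin_def by blast
  with GH H have "?H \<notin> pcompl (\<Union>(embL ` T))" unfolding pcompl_eq by blast
  then obtain K t where K: "K \<in> PF" "?H \<subseteq> K" "t \<in> T" "t \<in> K"
    using H unfolding pcompl_eq by (auto simp: embL_eq)
  moreover have "- t \<in> ?H" using K(3) subset_filter_gen[of "S \<union> uminus ` T"] by auto
  ultimately show False using PF_compl_not_mem by blast
qed

theorem mainTheorem3:
  shows
    \<comment> \<open>well-defined\<close>
    "(\<forall>b::'a::boolean_algebra. embL b \<in> boolL)
     \<comment> \<open>injective\<close>
     \<and> inj (embL :: 'a \<Rightarrow> 'a set set)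
     \<comment> \<open>boolean homomorphism into the booleanization\<close>
     \<and> (\<forall>a b::'a. embL (inf a b) = embL a \<inter> embL b)
     \<and> (\<forall>a b::'a. embL (sup a b) = bjoin {embL a, embL b})
     \<and> (\<forall>a::'a. embL (- a) = pcompl (embL a))
     \<and> embL (top::'a) = PF
     \<and> embL (bot::'a) = {}
     \<comment> \<open>dense\<close>
     \<and> (\<forall>x\<in>(boolL :: 'a set set set). \<exists>SS :: 'a set set.
            x = bjoin ((\<lambda>S. bmeet (embL ` S)) ` SS))
     \<comment> \<open>compact\<close>
     \<and> (\<forall>S T :: 'a set. bmeet (embL ` S) \<subseteq> bjoin (embL ` T) \<longrightarrow>
          (\<exists>S0 T0. finite S0 \<and> S0 \<subseteq> S \<and> finite T0 \<and> T0 \<subseteq> T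
                   \<and> fin_meet S0 \<le> fin_join T0))"
proof (intro conjI allI ballI impI)
  fix x :: "'a set set"
  assume "x \<in> boolL"
  then show "\<exists>SS. x = bjoin ((\<lambda>S. bmeet (embL ` S)) ` SS)"
    by (intro exI) (rule boolL_eq_bjoin_bmeet_embL)
next
  fix S T :: "'a set"
  assume "bmeet (embL ` S) \<subseteq> bjoin (embL ` T)"
  then show "\<exists>S0 T0. finite S0 \<and> S0 \<subseteq> S \<and> finite T0 \<and> T0 \<subseteq> T \<and> fin_meet S0 \<le> fin_join T0"
    by (rule embL_compact)
qed (simp_all add: embL_in_boolL inj_embL embL_inf embL_sup embL_uminus embL_top embL_bot)

end
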